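(* Let $F=(f_1,\dots,f_s)\subset\mathbb K[X]$ generate a zero-dimensional ideal $J$ with $d=\dim_{\mathbb K}\mathbb K[X]/J$, let $\mathcal B=\{b_1,\dots,b_d\}$ be any set of monomials whose classes form a basis of $\mathbb K[X]/J$ (not necessarily a standard basis), and let $a\neq1$ be a monomial. Let $T_a\in\mathbb K^{d\times d}$ be the matrix of multiplication by $a$ on $\mathbb K[X]/J$ in the basis $\mathcal B$, i.e. $[a b_i]=\sum_j t_{ij}[b_j]$, and put $V=a\,\mathbf b-T_a\mathbf b$, where $\mathbf b=(b_1,\dots,b_d)^\top$. Suppose $H\in\mathbb K[X]^{d\times s}$ satisfies $V=H\,(f_1,\dots,f_s)^\top$. For $k=1,\dots,s$ let $A_k$ be the set of monomials occurring in at least one entry of the $k$-th column of $H$, and $A=(A_1,\dots,A_s)$. Then the Macaulay matrix $M(A\cdot F)$ is an elimination template for $F$ with respect to $a$ (and $\mathcal B$).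
   Context: $[X]$ denotes the set of monomials in $X=\{x_1,\dots,x_k\}$. For a finite tuple of polynomials $P=(p_1,\dots,p_t)$, $[X]_P$ is the set of all monomials appearing in the $p_i$; if $[X]_P=\{m_1,\dots,m_n\}$, the Macaulay matrix $M(P)\in\mathbb K^{t\times n}$ has $(i,j)$ entry equal to the coefficient of $m_j$ in $p_i$. For $A=(A_1,\dots,A_s)$ with $A_j\subset[X]$ finite, the set of shifts is $A\cdot F=\{m f_j: m\in A_j,\ 1\le j\le s\}$. Given a monomial basis $\mathcal B$ of $\mathbb K[X]/\langle F\rangle$ (a set of monomials whose classes form a basis) and an action monomial $a$, set $\mathcal R=\{ab: b\in\mathcal B\}\setminus\mathcal B$ (reducible monomials), $\overline{\mathcal B}=\mathcal B\cap[X]_{A\cdot F}$ (basic monomials present), and $\mathcal E=[X]_{A\cdot F}\setminus(\mathcal R\cup\mathcal B)$ (excessive monomials). The Macaulay matrix $M(A\cdot F)$ with columns arranged in blocks $[\,M_{\mathcal E}\ M_{\mathcal R}\ M_{\overline{\mathcal B}}\,]$ is called an elimination template for $F$ with respect to $a$ if (1) $\mathcal R\subset[X]_{A\cdot F}$, and (2) its reduced row echelon form is $$\begin{bmatrix} * & 0 & * \\ 0 & I & \widetilde M_{\overline{\mathcal B}} \\ 0 & 0 & 0\end{bmatrix},$$ where $*$ denotes arbitrary submatrices, $0$ zero matrices of suitable sizes, $I$ the identity matrix of order $\#\mathcal R$, and $\widetilde M_{\overline{\mathcal B}}$ is a $\#\mathcal R\times\#\overline{\mathcal B}$ matrix (column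 blocks correspond to $\mathcal E$, $\mathcal R$, $\overline{\mathcal B}$). *)

theory Defs
  imports "HOL-Library.Poly_Mapping" "Jordan_Normal_Form.Gauss_Jordan_Elimination"
begin

text \<open>Monomials in the variables of type 'v are exponent vectors finitely supported maps from variables to nat
  (the monomial 1 is 0, multiplication of monomials is +); polynomials over 'k are
  finitely supported maps from monomials to coefficients, with the convolution product.\<close>

type_synonym 'v monom = "'v \<Rightarrow>\<^sub>0 nat"
type_synonym ('v, 'k) mpoly = "('v \<Rightarrow>\<^sub>0 nat) \<Rightarrow>\<^sub>0 'k"

definition mono :: "'v monom \<Rightarrow> ('v, 'k::zero_neq_one) mpoly" where
  "mono m = Poly_Mapping.single m 1"

definition gen_ideal :: "('v, 'k::comm_ring_1) mpoly list \<Rightarrow> ('v, 'k) mpoly set" where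
  "gen_ideal F = {p. \<exists>h. p = (\<Sum>i<length F. h i * F ! i)}"

definition is_monomial_basis :: "('v, 'k::field) mpoly set \<Rightarrow> 'v monom set \<Rightarrow> bool" where
  "is_monomial_basis J B \<longleftrightarrow> finite B \<and>
     (\<forall>p. \<exists>c. p - (\<Sum>b\<in>B. Poly_Mapping.single b (c b)) \<in> J) \<and>
     (\<forall>c. (\<Sum>b\<in>B. Poly_Mapping.single b (c b)) \<in> J \<longrightarrow> (\<forall>b\<in>B. c b = 0))"

definition is_mult_matrix ::
  "('v, 'k::field) mpoly set \<Rightarrow> 'v monom set \<Rightarrow> 'v monom \<Rightarrow> ('v monom \<Rightarrow> 'v monom \<Rightarrow> 'k) \<Rightarrow> bool" where
  "is_mult_matrix J B a T \<longleftrightarrow>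
     (\<forall>b\<in>B. mono (a + b) - (\<Sum>b'\<in>B. Poly_Mapping.single b' (T b b')) \<in> J)"

definition Vvec :: "'v monom set \<Rightarrow> 'v monom \<Rightarrow> ('v monom \<Rightarrow> 'v monom \<Rightarrow> 'k::field)
    \<Rightarrow> 'v monom \<Rightarrow> ('v, 'k) mpoly" where
  "Vvec B a T b = mono (a + b) - (\<Sum>b'\<in>B. Poly_Mapping.single b' (T b b'))"

definition shifts :: "(nat \<Rightarrow> 'v monom set) \<Rightarrow> ('v, 'k::field) mpoly list \<Rightarrow> ('v, 'k) mpoly set" where
  "shifts A F = {mono m * F ! j | m j. j < length F \<and> m \<in> A j}"

definition monoms_of :: "('v, 'k::zero) mpoly set \<Rightarrow> 'v monom set" where
  "monoms_of P = \<Union> (Poly_Mapping.keys ` P)"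

definition macaulay :: "('v, 'k::zero) mpoly list \<Rightarrow> 'v monom list \<Rightarrow> 'k mat" where
  "macaulay ps ms = mat (length ps) (length ms) (\<lambda>(i, j). Poly_Mapping.lookup (ps ! i) (ms ! j))"

text \<open>The block shape [[*,0,*],[0,I,*],[0,0,0]] with column blocks of sizes nE, nR, nB.\<close>
definition block_form :: "'k::{zero,one} mat \<Rightarrow> nat \<Rightarrow> nat \<Rightarrow> nat \<Rightarrow> bool" where
  "block_form M nE nR nB \<longleftrightarrow> dim_col M = nE + nR + nB \<and>
     (\<exists>k. k + nR \<le> dim_row M \<and>
        (\<forall>i<k. \<forall>j<nR. M $$ (i, nE + j) = 0) \<and>
        (\<forall>i<nR. (\<forall>j<nE. M $$ (k + i, j) = 0) \<and>
                 (\<forall>j<nR. M $$ (k + i, nE + j) = (if i = j then 1 else 0))) \<and>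
        (\<forall>i. k + nR \<le> i \<and> i < dim_row M \<longrightarrow> (\<forall>j<dim_col M. M $$ (i, j) = 0)))"

text \<open>The reduced row echelon form is the one computed by
  Gauss-Jordan elimination; the block condition is required for every ordering of
  the rows and of the columns within each block (it is independent of these orders).\<close>
definition elim_template ::
  "('v, 'k::field) mpoly list \<Rightarrow> 'v monom set \<Rightarrow> 'v monom \<Rightarrow> (nat \<Rightarrow> 'v monom set) \<Rightarrow> bool" where
  "elim_template F B a A \<longleftrightarrow>
     (let S = shifts A F;
          Ms = monoms_of S;
          R = (\<lambda>b. a + b) ` B - B;
          Bb = B \<inter> Ms;
          E = Ms - (R \<union> B)
      in (\<forall>j<length F. finite (A j)) \<and> R \<subseteq> Ms \<and>
         (\<forall>rows es rs bs. distinct rows \<and> set rows = S \<and>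
             distinct es \<and> set es = E \<and> distinct rs \<and> set rs = R \<and>
             distinct bs \<and> set bs = Bb \<longrightarrow>
             block_form (gauss_jordan_single (macaulay rows (es @ rs @ bs)))
               (length es) (length rs) (length bs)))"

end

theory Submission
  imports Defs
begin

text \<open>Each row \<open>a b - T\<^sub>a b\<close> of \<open>V = H F\<close> is a combination of the shifts \<open>A \<cdot> F\<close>; for a
  reducible monomial \<open>r = a b\<close> it equals \<open>r\<close> minus a combination of basic monomials, so the
  row space of the Macaulay matrix, restricted to the excessive and reducible columns, contains
  the unit vector of column \<open>r\<close>. Conversely, a row-space element vanishing on those columns is
  supported on \<open>\<B>\<close> and lies in the ideal, hence is zero by the linear independence of \<open>\<B>\<close>
  modulo the ideal. Both properties survive row operations, and in reduced row echelon form they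
  force the pivots of the reducible columns into an identity block followed only by zero rows.\<close>

definition row_comb :: "'a::semiring_0 mat \<Rightarrow> (nat \<Rightarrow> 'a) \<Rightarrow> nat \<Rightarrow> 'a" where
  "row_comb M y c = (\<Sum>i<dim_row M. y i * M $$ (i, c))"

lemma row_comb_mult:
  assumes P: "P \<in> carrier_mat nr n" and M: "M \<in> carrier_mat n nc" and c: "c < nc"
  shows "row_comb (P * M) y c = row_comb M (row_comb P y) c"
proof -
  have "row_comb (P * M) y c = (\<Sum>i<nr. \<Sum>k<n. y i * P $$ (i, k) * M $$ (k, c))"
    using assms unfolding row_comb_def
    by (auto simp: scalar_prod_def atLeast0LessThan sum_distrib_left mult.assoc intro!: sum.cong)
  also have "\<dots> = row_comb M (row_comb P y) c"
    using P M unfolding row_comb_def by (subst sum.swap) (simp add: sum_distrib_right)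
  finally show ?thesis .
qed

lemma row_comb_unit:
  fixes M :: "'a::semiring_1 mat"
  shows "i < dim_row M \<Longrightarrow> row_comb M (\<lambda>i'. if i' = i then 1 else 0) c = M $$ (i, c)"
  by (simp add: row_comb_def if_distrib[of "\<lambda>x. x * _"] cong: if_cong)

context
  fixes C :: "'a::semiring_1 mat" and f :: "nat \<Rightarrow> nat" and nr nc :: nat
  assumes dim: "dim_row C = nr" and pivot: "pivot_fun C f nc"
begin

lemma pivot_fun_less: "i < i' \<Longrightarrow> i' < nr \<Longrightarrow> f i' < nc \<Longrightarrow> f i < f i'"
proof (induction i' arbitrary: i)
  case (Suc i')
  have step: "f i' < f (Suc i')"
    using pivot_funD(3)[OF dim pivot, of i'] Suc.prems by auto
  show ?case
  proof (cases "i = i'")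
    case False
    then have "f i < f i'"
      using Suc step by (intro Suc.IH) auto
    then show ?thesis using step by simp
  qed (use step in simp)
qed simp

lemma pivot_rows_consecutive:
  assumes "f i = c" "f i' = Suc c" "i < nr" "i' < nr" "Suc c < nc"
  shows "i' = Suc i"
proof -
  have "i < i'"
    using pivot_fun_less[of i' i] assms by (cases "i' < i") (auto simp: not_less_iff_gr_or_eq)
  moreover have "\<not> Suc i < i'"
    using pivot_fun_less[of i "Suc i"] pivot_fun_less[of "Suc i" i'] assms by force
  ultimately show ?thesis by simp
qed

lemma row_comb_pivot: "i < nr \<Longrightarrow> f i < nc \<Longrightarrow> row_comb C y (f i) = y i"
proof -
  assume i: "i < nr" and fi: "f i < nc"
  have "row_comb C y (f i) = (\<Sum>i'<nr. if i' = i then y i else 0)"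
    unfolding row_comb_def dim using pivot_funD(4,5)[OF dim pivot i fi]
    by (intro sum.cong) auto
  then show ?thesis using i by simp
qed

lemma row_comb_eq_0_if_pivot_rows_0:
  assumes c: "c < nc" and y: "\<forall>i<nr. f i < nc \<longrightarrow> y i = 0"
  shows "row_comb C y c = 0"
  unfolding row_comb_def dim
proof (intro sum.neutral ballI)
  fix i assume "i \<in> {..<nr}"
  then show "y i * C $$ (i, c) = 0"
    using y pivot_funD(1)[OF dim pivot, of i] pivot_funD(2)[OF dim pivot, of i c] c by (cases "f i < nc") auto
qed

lemma pivot_rows_staircase:
  assumes "nE + nR \<le> nc"
    and pivots_below: "\<forall>i<nr. f i < nc \<longrightarrow> f i < nE + nR"
    and pivots_at: "\<forall>j<nR. \<exists>i<nr. f i = nE + j"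
  obtains k where "k + nR \<le> nr" "\<forall>j<nR. f (k + j) = nE + j"
    "\<forall>i. k + nR \<le> i \<and> i < nr \<longrightarrow> f i = nc"
proof (cases nR)
  case 0
  then show thesis by (intro that[of nr]) auto
next
  case (Suc n)
  then obtain k where k: "k < nr" "f k = nE" using pivots_at by fastforce
  have run: "k + j < nr \<and> f (k + j) = nE + j" if "j < nR" for j
    using that
  proof (induction j)
    case (Suc j)
    then obtain i where i: "i < nr" "f i = Suc (nE + j)" using pivots_at by fastforce
    with Suc pivot_rows_consecutive[of "k + j" "nE + j" i] \<open>nE + nR \<le> nc\<close>
    show ?case by auto
  qed (use k in simp)
  have "f i = nc" if "k + nR \<le> i" "i < nr" for i
  proof (rule ccontr)
    assume "f i \<noteq> nc"
    then have "f i < nc" using pivot_funD(1)[OF dim pivot \<open>i < nr\<close>] by simp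
    then have "f (k + n) < f i" using pivot_fun_less[of "k + n" i] that Suc by simp
    then show False using run[of n] pivots_below \<open>f i < nc\<close> that Suc by force
  qed
  moreover have "k + nR \<le> nr" using run[of n] Suc by simp
  ultimately show thesis using run by (intro that[of k]) auto
qed

lemma staircase_block_form:
  assumes "dim_col C = nc" "nc = nE + nR + nB" "k + nR \<le> nr"
    and run: "\<forall>j<nR. f (k + j) = nE + j"
    and zero_rows: "\<forall>i. k + nR \<le> i \<and> i < nr \<longrightarrow> f i = nc"
  shows "block_form C nE nR nB"
  unfolding block_form_def
proof (intro conjI exI[of _ k] allI impI)
  note D = pivot_funD[OF dim pivot]
  fix i j
  show "i < k \<Longrightarrow> j < nR \<Longrightarrow> C $$ (i, nE + j) = 0"
    using D(5)[of "k + j" i] run assms by auto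
  show "i < nR \<Longrightarrow> j < nE \<Longrightarrow> C $$ (k + i, j) = 0"
    using D(2)[of "k + i" j] run assms by auto
  show "i < nR \<Longrightarrow> j < nR \<Longrightarrow> C $$ (k + i, nE + j) = (if i = j then 1 else 0)"
    using D(4)[of "k + i"] D(5)[of "k + j" "k + i"] run assms by auto
  show "k + nR \<le> i \<and> i < dim_row C \<Longrightarrow> j < dim_col C \<Longrightarrow> C $$ (i, j) = 0"
    using D(2)[of i j] zero_rows assms dim by auto
qed (use assms dim in auto)

lemma pivot_fun_block_form:
  assumes cols: "dim_col C = nc" "nc = nE + nR + nB"
    and unit: "\<forall>j<nR. \<exists>y. \<forall>c<nE + nR. row_comb C y c = (if c = nE + j then 1 else 0)"
    and vanish: "\<forall>y. (\<forall>c<nE + nR. row_comb C y c = 0) \<longrightarrow> (\<forall>c<nc. row_comb C y c = 0)"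
  shows "block_form C nE nR nB"
proof -
  have below: "\<forall>i<nr. f i < nc \<longrightarrow> f i < nE + nR"
  proof (intro allI impI)
    fix i assume i: "i < nr" and fi: "f i < nc"
    show "f i < nE + nR"
    proof (rule ccontr)
      assume "\<not> f i < nE + nR"
      define y where "y = (\<lambda>i'. if i' = i then 1 else (0::'a))"
      have "\<forall>c<nE + nR. row_comb C y c = 0"
        using row_comb_unit[of i C] pivot_funD(2)[OF dim pivot i] i dim \<open>\<not> f i < nE + nR\<close>
        unfolding y_def by auto
      then have "row_comb C y (f i) = 0" using vanish fi by blast
      then show False using row_comb_pivot[OF i fi] y_def by simp
    qed
  qed
  have at: "\<forall>j<nR. \<exists>i<nr. f i = nE + j"
  proof (intro allI impI, rule ccontr)
    fix j assume j: "j < nR" and no_pivot: "\<not> (\<exists>i<nr. f i = nE + j)"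
    obtain y where y: "\<forall>c<nE + nR. row_comb C y c = (if c = nE + j then 1 else 0)"
      using unit j by blast
    have "y i = 0" if "i < nr" "f i < nc" for i
      using row_comb_pivot[OF that, of y] y below no_pivot that by auto
    then have "row_comb C y (nE + j) = 0"
      using row_comb_eq_0_if_pivot_rows_0[of "nE + j" y] j cols by simp
    then show False using y j by simp
  qed
  obtain k where "k + nR \<le> nr" "\<forall>j<nR. f (k + j) = nE + j"
    "\<forall>i. k + nR \<le> i \<and> i < nr \<longrightarrow> f i = nc"
    using pivot_rows_staircase[OF _ below at] cols by auto
  then show ?thesis using staircase_block_form cols by blast
qed

end

text \<open>Both hypotheses only concern the row space, which Gauss-Jordan elimination preserves.\<close>
lemma gauss_jordan_single_block_form:
  fixes M :: "'a::field mat"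
  assumes M: "M \<in> carrier_mat nr (nE + nR + nB)"
    and unit: "\<forall>j<nR. \<exists>y. \<forall>c<nE + nR. row_comb M y c = (if c = nE + j then 1 else 0)"
    and vanish: "\<forall>y. (\<forall>c<nE + nR. row_comb M y c = 0) \<longrightarrow> (\<forall>c<nE + nR + nB. row_comb M y c = 0)"
  shows "block_form (gauss_jordan_single M) nE nR nB"
proof -
  define C where "C = gauss_jordan_single M"
  note gj = gauss_jordan_single[OF M C_def[symmetric]]
  obtain P Q where PQ: "C = P * M" "P \<in> carrier_mat nr nr" "Q \<in> carrier_mat nr nr"
    "Q * P = 1\<^sub>m nr" using gj(4) by blast
  obtain f where f: "pivot_fun C f (nE + nR + nB)"
    using gj(2,3) unfolding row_echelon_form_def by auto
  have "M = Q * C"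
    using PQ M by (simp flip: assoc_mult_mat[OF PQ(3) PQ(2) M])
  then have M_comb: "row_comb M y c = row_comb C (row_comb Q y) c" if "c < nE + nR + nB" for y c
    using row_comb_mult[OF PQ(3) gj(2) that] by simp
  have C_comb: "row_comb C y c = row_comb M (row_comb P y) c" if "c < nE + nR + nB" for y c
    using row_comb_mult[OF PQ(2) M that] PQ(1) by simp
  show ?thesis unfolding C_def[symmetric]
  proof (rule pivot_fun_block_form[OF _ f])
    show "\<forall>j<nR. \<exists>y. \<forall>c<nE + nR. row_comb C y c = (if c = nE + j then 1 else 0)"
      using unit M_comb by (metis trans_less_add1)
    show "\<forall>y. (\<forall>c<nE + nR. row_comb C y c = 0) \<longrightarrow> (\<forall>c<nE + nR + nB. row_comb C y c = 0)"
      using vanish C_comb by (metis trans_less_add1)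
  qed (use gj(2) in auto)
qed

interpretation mpoly: Modules.module "\<lambda>c (p :: ('v, 'k::comm_ring_1) mpoly). Poly_Mapping.single 0 c * p"
  by unfold_locales
    (simp_all add: distrib_left distrib_right single_add mult_single mult.assoc[symmetric])

lemma lookup_single_0_mult:
  "Poly_Mapping.lookup (Poly_Mapping.single 0 c * p) m = c * Poly_Mapping.lookup p m"
  by (simp flip: mult_map_scale_conv_mult add: Poly_Mapping.map.rep_eq when_def)

lemma sum_single_lookup:
  assumes "finite X" "Poly_Mapping.keys p \<subseteq> X"
  shows "(\<Sum>m\<in>X. Poly_Mapping.single m (Poly_Mapping.lookup p m)) = p"
proof (rule poly_mapping_eqI)
  fix m
  have "Poly_Mapping.lookup (\<Sum>m'\<in>X. Poly_Mapping.single m' (Poly_Mapping.lookup p m')) m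
      = (\<Sum>m'\<in>X. if m' = m then Poly_Mapping.lookup p m else 0)"
    by (simp add: lookup_sum lookup_single when_def) (rule sum.cong, auto)
  also have "\<dots> = Poly_Mapping.lookup p m" using assms by (auto simp: in_keys_iff)
  finally show "Poly_Mapping.lookup (\<Sum>m\<in>X. Poly_Mapping.single m (Poly_Mapping.lookup p m)) m
      = Poly_Mapping.lookup p m" .
qed

lemma mem_span_set_iff:
  fixes ps :: "('v, 'k::comm_ring_1) mpoly list"
  assumes "distinct ps"
  shows "p \<in> mpoly.span (set ps) \<longleftrightarrow>
    (\<exists>y. p = (\<Sum>i<length ps. Poly_Mapping.single 0 (y i) * ps ! i))"
proof
  assume "p \<in> mpoly.span (set ps)"
  then obtain u where "p = (\<Sum>v\<in>set ps. Poly_Mapping.single 0 (u v) * v)"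
    unfolding mpoly.span_finite[OF finite_set] by blast
  also have "\<dots> = (\<Sum>i<length ps. Poly_Mapping.single 0 (u (ps ! i)) * ps ! i)"
    by (rule sum.reindex_bij_betw[OF bij_betw_nth[OF assms refl refl], symmetric])
  finally show "\<exists>y. p = (\<Sum>i<length ps. Poly_Mapping.single 0 (y i) * ps ! i)"
    by (rule exI[of _ "\<lambda>i. u (ps ! i)"])
next
  assume "\<exists>y. p = (\<Sum>i<length ps. Poly_Mapping.single 0 (y i) * ps ! i)"
  then obtain y where p: "p = (\<Sum>i<length ps. Poly_Mapping.single 0 (y i) * ps ! i)" by blast
  have "Poly_Mapping.single 0 (y i) * ps ! i \<in> mpoly.span (set ps)" if "i < length ps" for i
    using that by (intro mpoly.span_scale mpoly.span_base) simp
  then show "p \<in> mpoly.span (set ps)"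
    unfolding p by (intro mpoly.span_sum) simp
qed

lemma keys_subset_subspace: "mpoly.subspace {p. Poly_Mapping.keys p \<subseteq> X}"
proof (rule mpoly.subspaceI)
  show "p + q \<in> {p. Poly_Mapping.keys p \<subseteq> X}"
    if "p \<in> {p. Poly_Mapping.keys p \<subseteq> X}" "q \<in> {p. Poly_Mapping.keys p \<subseteq> X}" for p q
    using that keys_add[of p q] by auto
  show "Poly_Mapping.single 0 c * p \<in> {p. Poly_Mapping.keys p \<subseteq> X}"
    if "p \<in> {p. Poly_Mapping.keys p \<subseteq> X}" for c p
  proof -
    have "Poly_Mapping.keys (Poly_Mapping.single 0 c * p) \<subseteq> Poly_Mapping.keys p"
      by (auto simp: in_keys_iff lookup_single_0_mult)
    then show ?thesis using that by auto
  qed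
qed simp

lemma gen_ideal_subspace: "mpoly.subspace (gen_ideal F)"
proof (rule mpoly.subspaceI)
  show "0 \<in> gen_ideal F" unfolding gen_ideal_def by (auto intro: exI[of _ "\<lambda>_. 0"])
  show "p + q \<in> gen_ideal F" if "p \<in> gen_ideal F" "q \<in> gen_ideal F" for p q
    using that unfolding gen_ideal_def
    by (auto intro: exI[of _ "\<lambda>i. _ i + _ i"] simp: sum.distrib distrib_right)
  show "Poly_Mapping.single 0 c * p \<in> gen_ideal F" if "p \<in> gen_ideal F" for c p
    using that unfolding gen_ideal_def
    by (auto intro: exI[of _ "\<lambda>i. Poly_Mapping.single 0 c * _ i"] simp: sum_distrib_left mult.assoc)
qed

lemma shifts_subset_gen_ideal: "shifts A F \<subseteq> gen_ideal F"
proof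
  fix p assume "p \<in> shifts A F"
  then obtain m j where p: "p = mono m * F ! j" "j < length F" unfolding shifts_def by blast
  show "p \<in> gen_ideal F"
    unfolding gen_ideal_def
  proof (intro CollectI exI)
    show "p = (\<Sum>i<length F. (if i = j then mono m else 0) * F ! i)"
      using p by (simp add: if_distrib[of "\<lambda>x. x * _"] cong: if_cong)
  qed
qed

lemma sum_mult_mem_span_shifts:
  assumes "\<forall>j<length F. Poly_Mapping.keys (h j) \<subseteq> A j"
  shows "(\<Sum>j<length F. h j * F ! j) \<in> mpoly.span (shifts A F)"
proof (rule mpoly.span_sum)
  fix j assume "j \<in> {..<length F}"
  then have j: "j < length F" by simp
  have "h j * F ! j = (\<Sum>m\<in>Poly_Mapping.keys (h j).
      Poly_Mapping.single 0 (Poly_Mapping.lookup (h j) m) * (mono m * F ! j))"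
    by (subst (1) sum_single_lookup[OF finite_keys order_refl, symmetric])
      (simp add: sum_distrib_right mono_def mult_single mult.assoc[symmetric])
  also have "\<dots> \<in> mpoly.span (shifts A F)"
    using j assms unfolding shifts_def
    by (intro mpoly.span_sum mpoly.span_scale mpoly.span_base) blast
  finally show "h j * F ! j \<in> mpoly.span (shifts A F)" .
qed

lemma monomial_basis_eq_0:
  assumes "is_monomial_basis J B" "p \<in> J" "Poly_Mapping.keys p \<subseteq> B"
  shows "p = 0"
proof -
  have "finite B" using assms(1) unfolding is_monomial_basis_def by simp
  then have "\<forall>b\<in>B. Poly_Mapping.lookup p b = 0"
    using assms sum_single_lookup[of B p] unfolding is_monomial_basis_def by metis
  then show ?thesis using assms(3) by (intro poly_mapping_eqI) (auto simp: in_keys_iff)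
qed

definition is_reduction :: "'v monom set \<Rightarrow> 'v monom \<Rightarrow> ('v, 'k::zero_neq_one) mpoly \<Rightarrow> bool" where
  "is_reduction B r p \<longleftrightarrow> (\<forall>m. m \<notin> B \<longrightarrow> Poly_Mapping.lookup p m = (if m = r then 1 else 0))"

lemma is_reduction_Vvec:
  assumes "finite B"
  shows "is_reduction B (a + b) (Vvec B a T b)"
proof -
  have "Poly_Mapping.lookup (\<Sum>b'\<in>B. Poly_Mapping.single b' (T b b')) m = 0" if "m \<notin> B" for m
    using that by (auto simp: lookup_sum lookup_single when_def intro!: sum.neutral)
  then show ?thesis
    unfolding is_reduction_def Vvec_def mono_def by (simp add: lookup_minus lookup_single when_def)
qed

lemma row_comb_macaulay:
  "c < length ms \<Longrightarrow> row_comb (macaulay ps ms) y c =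
    Poly_Mapping.lookup (\<Sum>i<length ps. Poly_Mapping.single 0 (y i) * ps ! i) (ms ! c)"
  by (simp add: row_comb_def macaulay_def lookup_sum lookup_single_0_mult)

lemma macaulay_unit_row_comb:
  fixes ps :: "('v, 'k::field) mpoly list"
  assumes "distinct ps" "distinct (es @ rs)" "j < length rs" "p \<in> mpoly.span (set ps)"
    and unit: "\<forall>m\<in>set (es @ rs). Poly_Mapping.lookup p m = (if m = rs ! j then 1 else 0)"
  shows "\<exists>y. \<forall>c<length es + length rs.
    row_comb (macaulay ps (es @ rs @ bs)) y c = (if c = length es + j then 1 else 0)"
proof -
  obtain y where y: "p = (\<Sum>i<length ps. Poly_Mapping.single 0 (y i) * ps ! i)"
    using assms(4) mem_span_set_iff[OF assms(1)] by blast
  have "row_comb (macaulay ps (es @ rs @ bs)) y c = (if c = length es + j then 1 else 0)"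
    if c: "c < length es + length rs" for c
  proof -
    have c': "c < length (es @ rs)" using c by simp
    have "(es @ rs) ! c = rs ! j \<longleftrightarrow> c = length es + j"
      using nth_eq_iff_index_eq[OF assms(2) c', of "length es + j"] assms(3) by (simp add: nth_append)
    moreover have "(es @ rs @ bs) ! c = (es @ rs) ! c" using nth_append_left[OF c', of bs] by simp
    ultimately show ?thesis
      using row_comb_macaulay[of c "es @ rs @ bs" ps y] unit nth_mem[OF c'] c y by simp
  qed
  then show ?thesis by blast
qed

lemma macaulay_vanishing_row_comb:
  fixes ps :: "('v, 'k::field) mpoly list"
  assumes vanish: "\<forall>p\<in>mpoly.span (set ps). (\<forall>m\<in>set (es @ rs). Poly_Mapping.lookup p m = 0) \<longrightarrow>
      (\<forall>m\<in>set bs. Poly_Mapping.lookup p m = 0)"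
    and zero: "\<forall>c<length es + length rs. row_comb (macaulay ps (es @ rs @ bs)) y c = 0"
  shows "\<forall>c<length es + length rs + length bs. row_comb (macaulay ps (es @ rs @ bs)) y c = 0"
proof -
  define p where "p = (\<Sum>i<length ps. Poly_Mapping.single 0 (y i) * ps ! i)"
  have col: "row_comb (macaulay ps (es @ rs @ bs)) y c = Poly_Mapping.lookup p ((es @ rs @ bs) ! c)"
    if "c < length es + length rs + length bs" for c
    using row_comb_macaulay[of c "es @ rs @ bs"] that unfolding p_def by simp
  have "Poly_Mapping.lookup p ((es @ rs) ! c) = 0" if "c < length (es @ rs)" for c
    using zero col[of c] nth_append_left[OF that, of bs] that by simp
  then have "\<forall>m\<in>set (es @ rs). Poly_Mapping.lookup p m = 0"
    unfolding all_set_conv_all_nth by blast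
  moreover have "p \<in> mpoly.span (set ps)"
    unfolding p_def by (intro mpoly.span_sum mpoly.span_scale mpoly.span_base) simp
  ultimately have vanishes: "\<forall>m\<in>set (es @ rs @ bs). Poly_Mapping.lookup p m = 0"
    using vanish by auto
  show ?thesis
  proof (intro allI impI)
    fix c assume c: "c < length es + length rs + length bs"
    then have "(es @ rs @ bs) ! c \<in> set (es @ rs @ bs)" by (intro nth_mem) simp
    then show "row_comb (macaulay ps (es @ rs @ bs)) y c = 0" using col[OF c] vanishes by simp
  qed
qed

lemma macaulay_gauss_jordan_block_form:
  fixes ps :: "('v, 'k::field) mpoly list"
  assumes "distinct ps" "distinct (es @ rs)"
    and unit: "\<forall>r\<in>set rs. \<exists>p\<in>mpoly.span (set ps).
      \<forall>m\<in>set (es @ rs). Poly_Mapping.lookup p m = (if m = r then 1 else 0)"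
    and vanish: "\<forall>p\<in>mpoly.span (set ps). (\<forall>m\<in>set (es @ rs). Poly_Mapping.lookup p m = 0) \<longrightarrow>
      (\<forall>m\<in>set bs. Poly_Mapping.lookup p m = 0)"
  shows "block_form (gauss_jordan_single (macaulay ps (es @ rs @ bs)))
    (length es) (length rs) (length bs)"
proof (rule gauss_jordan_single_block_form)
  show "macaulay ps (es @ rs @ bs) \<in> carrier_mat (length ps) (length es + length rs + length bs)"
    by (simp add: macaulay_def add.assoc)
  show "\<forall>j<length rs. \<exists>y. \<forall>c<length es + length rs.
      row_comb (macaulay ps (es @ rs @ bs)) y c = (if c = length es + j then 1 else 0)"
    using unit macaulay_unit_row_comb[OF assms(1,2)] by (meson nth_mem)
  show "\<forall>y. (\<forall>c<length es + length rs. row_comb (macaulay ps (es @ rs @ bs)) y c = 0) \<longrightarrow>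
      (\<forall>c<length es + length rs + length bs. row_comb (macaulay ps (es @ rs @ bs)) y c = 0)"
    using macaulay_vanishing_row_comb[OF vanish] by blast
qed

lemma span_shifts_subset:
  "mpoly.span (shifts A F) \<subseteq> gen_ideal F \<inter> {p. Poly_Mapping.keys p \<subseteq> monoms_of (shifts A F)}"
proof (rule mpoly.span_minimal)
  show "shifts A F \<subseteq> gen_ideal F \<inter> {p. Poly_Mapping.keys p \<subseteq> monoms_of (shifts A F)}"
    using shifts_subset_gen_ideal unfolding monoms_of_def by blast
qed (intro mpoly.subspace_inter gen_ideal_subspace keys_subset_subspace)

lemma reduction_mem_monoms_of_shifts:
  assumes "p \<in> mpoly.span (shifts A F)" "is_reduction B r p" "r \<notin> B"
  shows "r \<in> monoms_of (shifts A F)"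
proof -
  have "r \<in> Poly_Mapping.keys p" using assms(2,3) unfolding is_reduction_def by (simp add: in_keys_iff)
  then show ?thesis using span_shifts_subset assms(1) by blast
qed

lemma span_shifts_eq_0_if_vanishes_off_basis:
  assumes basis: "is_monomial_basis (gen_ideal F) B" and p: "p \<in> mpoly.span (shifts A F)"
    and vanishes: "\<forall>m\<in>monoms_of (shifts A F) - B. Poly_Mapping.lookup p m = 0"
  shows "p = 0"
proof (rule monomial_basis_eq_0[OF basis])
  show "p \<in> gen_ideal F" using p span_shifts_subset by blast
  show "Poly_Mapping.keys p \<subseteq> B"
    using p span_shifts_subset[of A F] vanishes by (auto simp: in_keys_iff)
qed

lemma elim_template_if_reductions_in_span:
  assumes basis: "is_monomial_basis (gen_ideal F) B"
    and finite: "\<forall>j<length F. finite (A j)"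
    and reductions: "\<forall>r\<in>(\<lambda>b. a + b) ` B - B. \<exists>p\<in>mpoly.span (shifts A F). is_reduction B r p"
  shows "elim_template F B a A"
proof -
  define S where "S = shifts A F"
  define R where "R = (\<lambda>b. a + b) ` B - B"
  have R_sub: "R \<subseteq> monoms_of S"
  proof
    fix r assume r: "r \<in> R"
    then obtain p where "p \<in> mpoly.span S" "is_reduction B r p"
      using reductions unfolding R_def S_def by blast
    then show "r \<in> monoms_of S"
      using reduction_mem_monoms_of_shifts r unfolding R_def S_def by blast
  qed
  have block: "block_form (gauss_jordan_single (macaulay rows (es @ rs @ bs)))
      (length es) (length rs) (length bs)"
    if rows: "distinct rows" "set rows = S" and es: "distinct es" "set es = monoms_of S - (R \<union> B)"
      and rs: "distinct rs" "set rs = R" for rows es rs bs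
  proof (rule macaulay_gauss_jordan_block_form[OF rows(1)])
    have ers: "set (es @ rs) = monoms_of S - B"
      using es rs R_sub unfolding R_def by auto
    show "distinct (es @ rs)" using es rs by auto
    show "\<forall>r\<in>set rs. \<exists>p\<in>mpoly.span (set rows).
        \<forall>m\<in>set (es @ rs). Poly_Mapping.lookup p m = (if m = r then 1 else 0)"
    proof
      fix r assume "r \<in> set rs"
      then obtain p where "p \<in> mpoly.span S" "is_reduction B r p"
        using reductions rs(2) unfolding R_def S_def by blast
      then show "\<exists>p\<in>mpoly.span (set rows).
          \<forall>m\<in>set (es @ rs). Poly_Mapping.lookup p m = (if m = r then 1 else 0)"
        using ers rows(2) unfolding is_reduction_def by blast
    qed
    show "\<forall>p\<in>mpoly.span (set rows). (\<forall>m\<in>set (es @ rs). Poly_Mapping.lookup p m = 0) \<longrightarrow>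
        (\<forall>m\<in>set bs. Poly_Mapping.lookup p m = 0)"
    proof (rule ballI, rule impI)
      fix p assume "p \<in> mpoly.span (set rows)" "\<forall>m\<in>set (es @ rs). Poly_Mapping.lookup p m = 0"
      then have "p = 0"
        using span_shifts_eq_0_if_vanishes_off_basis[OF basis, of p A] rows(2) ers
        unfolding S_def by simp
      then show "\<forall>m\<in>set bs. Poly_Mapping.lookup p m = 0" by simp
    qed
  qed
  show ?thesis
    unfolding elim_template_def Let_def S_def[symmetric] R_def[symmetric]
  proof (intro conjI finite R_sub allI impI)
    fix rows es rs bs
    assume "distinct rows \<and> set rows = S \<and> distinct es \<and> set es = monoms_of S - (R \<union> B) \<and>
      distinct rs \<and> set rs = R \<and> distinct bs \<and> set bs = B \<inter> monoms_of S"
    then show "block_form (gauss_jordan_single (macaulay rows (es @ rs @ bs)))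
        (length es) (length rs) (length bs)"
      by (elim conjE) (rule block; assumption)
  qed
qed

theorem mainTheorem2:
  fixes F :: "('v, 'k::field) mpoly list"
    and B :: "'v monom set"
    and a :: "'v monom"
    and T :: "'v monom \<Rightarrow> 'v monom \<Rightarrow> 'k"
    and H :: "'v monom \<Rightarrow> nat \<Rightarrow> ('v, 'k) mpoly"
  assumes basis: "is_monomial_basis (gen_ideal F) B"
    and a_ne_1: "a \<noteq> 0"
    and mult: "is_mult_matrix (gen_ideal F) B a T"
    and H: "\<forall>b\<in>B. Vvec B a T b = (\<Sum>k<length F. H b k * F ! k)"
  shows "elim_template F B a (\<lambda>k. \<Union>b\<in>B. Poly_Mapping.keys (H b k))"
proof (rule elim_template_if_reductions_in_span[OF basis])
  have "finite B" using basis unfolding is_monomial_basis_def by simp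
  then show "\<forall>j<length F. finite (\<Union>b\<in>B. Poly_Mapping.keys (H b j))" by simp
  have "Vvec B a T b \<in> mpoly.span (shifts (\<lambda>k. \<Union>b\<in>B. Poly_Mapping.keys (H b k)) F)"
    if "b \<in> B" for b
  proof -
    have "\<forall>j<length F. Poly_Mapping.keys (H b j) \<subseteq> (\<Union>b\<in>B. Poly_Mapping.keys (H b j))"
      using that by blast
    from sum_mult_mem_span_shifts[OF this] show ?thesis using H that by simp
  qed
  with is_reduction_Vvec[OF \<open>finite B\<close>]
  show "\<forall>r\<in>(\<lambda>b. a + b) ` B - B.
      \<exists>p\<in>mpoly.span (shifts (\<lambda>k. \<Union>b\<in>B. Poly_Mapping.keys (H b k)) F). is_reduction B r p"
    by blast
qed

end
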